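(* Let $N\le V$ be a subspace such that there is an $X\in\mathcal G$ with $X\le N$ and $\dim(N/X)=1$, and let $\mathcal G\langle N]:=\{E\le V\mid E\le N \text{ and } \dim(N/E)=1\}$ (the top with carrier $N$). Then: (1) $\mathcal G\langle N]\subseteq\mathcal G$; (2) any two distinct elements $E,E'\in\mathcal G\langle N]$ are adjacent; (3) two adjacent elements $E,E'\in\mathcal G$ both belong to $\mathcal G\langle N]$ if and only if $E+E'=N$.
   Context: $K$ is a (not necessarily commutative) field and $V$ is a left vector space over $K$ of arbitrary (possibly infinite) dimension with $\dim V>2$. $\mathcal G:=\{X\le V\mid X\cong V/X\}$ is the set of subspaces of $V$ isomorphic (as $K$-vector spaces) to their quotient space, assumed nonempty. Dimensions are vector space dimensions. Two elements $X,Y\in\mathcal G$ are called adjacent if $\dim((X+Y)/X)=\dim((X+Y)/Y)=1$, equivalently $\dim(X/(X\cap Y))=\dim(Y/(X\cap Y))=1$. *)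

theory Defs
  imports Main
begin

text \<open>Left vector space over a (not necessarily commutative) field K, i.e. a division ring.
  The ambient space V is the whole carrier type 'v; scalar multiplication is s.\<close>

definition left_vector_space :: "('k::division_ring \<Rightarrow> 'v::ab_group_add \<Rightarrow> 'v) \<Rightarrow> bool" where
  "left_vector_space s \<longleftrightarrow>
     (\<forall>a x y. s a (x + y) = s a x + s a y) \<and>
     (\<forall>a b x. s (a + b) x = s a x + s b x) \<and>
     (\<forall>a b x. s (a * b) x = s a (s b x)) \<and>
     (\<forall>x. s 1 x = x)"

definition subspace :: "('k::division_ring \<Rightarrow> 'v::ab_group_add \<Rightarrow> 'v) \<Rightarrow> 'v set \<Rightarrow> bool" where
  "subspace s X \<longleftrightarrow> 0 \<in> X \<and> (\<forall>x\<in>X. \<forall>y\<in>X. x + y \<in> X) \<and> (\<forall>c. \<forall>x\<in>X. s c x \<in> X)"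

definition dim_gt_2 :: "('k::division_ring \<Rightarrow> 'v::ab_group_add \<Rightarrow> 'v) \<Rightarrow> bool" where
  "dim_gt_2 s \<longleftrightarrow> (\<exists>u v w. \<forall>a b c. s a u + s b v + s c w = 0 \<longrightarrow> a = 0 \<and> b = 0 \<and> c = 0)"

definition ssum :: "'v::ab_group_add set \<Rightarrow> 'v set \<Rightarrow> 'v set" where
  "ssum X Y = {x + y | x y. x \<in> X \<and> y \<in> Y}"

definition coset :: "'v::ab_group_add set \<Rightarrow> 'v \<Rightarrow> 'v set" where
  "coset X v = (\<lambda>x. v + x) ` X"

text \<open>phi is a K-linear isomorphism from X onto the quotient space V/X
  (quotient operations computed on representatives).\<close>
definition quot_iso :: "('k::division_ring \<Rightarrow> 'v::ab_group_add \<Rightarrow> 'v) \<Rightarrow> 'v set \<Rightarrow> ('v \<Rightarrow> 'v set) \<Rightarrow> bool" where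
  "quot_iso s X \<phi> \<longleftrightarrow>
     bij_betw \<phi> X (range (coset X)) \<and>
     (\<forall>x\<in>X. \<forall>y\<in>X. \<forall>a\<in>\<phi> x. \<forall>b\<in>\<phi> y. \<phi> (x + y) = coset X (a + b)) \<and>
     (\<forall>c. \<forall>x\<in>X. \<forall>a\<in>\<phi> x. \<phi> (s c x) = coset X (s c a))"

definition Gr :: "('k::division_ring \<Rightarrow> 'v::ab_group_add \<Rightarrow> 'v) \<Rightarrow> 'v set set" where
  "Gr s = {X. subspace s X \<and> (\<exists>\<phi>. quot_iso s X \<phi>)}"

definition codim1 :: "('k::division_ring \<Rightarrow> 'v::ab_group_add \<Rightarrow> 'v) \<Rightarrow> 'v set \<Rightarrow> 'v set \<Rightarrow> bool" where
  "codim1 s E N \<longleftrightarrow> E \<subseteq> N \<and> (\<exists>v\<in>N. v \<notin> E \<and> N = {e + s c v | e c. e \<in> E})"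

definition adjacent :: "('k::division_ring \<Rightarrow> 'v::ab_group_add \<Rightarrow> 'v) \<Rightarrow> 'v set \<Rightarrow> 'v set \<Rightarrow> bool" where
  "adjacent s X Y \<longleftrightarrow> codim1 s X (ssum X Y) \<and> codim1 s Y (ssum X Y)"

definition top_of :: "('k::division_ring \<Rightarrow> 'v::ab_group_add \<Rightarrow> 'v) \<Rightarrow> 'v set \<Rightarrow> 'v set set" where
  "top_of s N = {E. subspace s E \<and> E \<subseteq> N \<and> codim1 s E N}"

end

theory Submission
  imports Defs
begin

text \<open>All hyperplanes of N are conjugate under automorphisms of V: if E and X are distinct
  hyperplanes of N, pick e0 \<in> E - X and x0 \<in> X - E; then X = (E \<inter> X) + K x0 and
  E = (E \<inter> X) + K e0, and a transvection v \<mapsto> v + f v (e0 - x0), where the linear form f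
  (obtained by Zorn's lemma) vanishes on E \<inter> X and on e0 - x0 and takes the value 1 at x0,
  maps X onto E. Since an automorphism transports an isomorphism X \<cong> V/X to one between
  its images, membership in Gr s passes from X to every hyperplane of N. Adjacency statements
  follow because two distinct hyperplanes of N span N, and a subspace strictly between a
  hyperplane and N is N itself.\<close>

locale left_vs =
  fixes s :: "'k::division_ring \<Rightarrow> 'v::ab_group_add \<Rightarrow> 'v"
  assumes left_vector_space: "left_vector_space s"
begin

lemma scale_add_right: "s a (x + y) = s a x + s a y"
  using left_vector_space unfolding left_vector_space_def by blast

lemma scale_add_left: "s (a + b) x = s a x + s b x"
  using left_vector_space unfolding left_vector_space_def by blast

lemma scale_scale: "s a (s b x) = s (a * b) x"
  using left_vector_space unfolding left_vector_space_def by simp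

lemma scale_one [simp]: "s 1 x = x"
  using left_vector_space unfolding left_vector_space_def by blast

lemma scale_zero_right [simp]: "s a 0 = 0"
  using scale_add_right[of a 0 0] by simp

lemma scale_zero_left [simp]: "s 0 x = 0"
  using scale_add_left[of 0 0 x] by simp

lemma scale_minus_right: "s a (- x) = - s a x"
  using minus_unique[of "s a x" "s a (- x)"] scale_add_right[of a x "- x"] by simp

lemma scale_minus_left: "s (- a) x = - s a x"
  using minus_unique[of "s a x" "s (- a) x"] scale_add_left[of a "- a" x] by simp

lemma scale_diff_right: "s a (x - y) = s a x - s a y"
  using scale_add_right[of a x "- y"] by (simp add: scale_minus_right)

lemma scale_diff_left: "s (a - b) x = s a x - s b x"
  using scale_add_left[of a "- b" x] by (simp add: scale_minus_left)

lemma scale_eq_iff_inverse: "c \<noteq> 0 \<Longrightarrow> s c x = y \<longleftrightarrow> x = s (inverse c) y"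
  by (auto simp: scale_scale)

lemma subspace_zero: "subspace s X \<Longrightarrow> 0 \<in> X"
  unfolding subspace_def by blast

lemma subspace_add: "subspace s X \<Longrightarrow> x \<in> X \<Longrightarrow> y \<in> X \<Longrightarrow> x + y \<in> X"
  unfolding subspace_def by blast

lemma subspace_scale: "subspace s X \<Longrightarrow> x \<in> X \<Longrightarrow> s c x \<in> X"
  unfolding subspace_def by blast

lemma subspace_neg: "subspace s X \<Longrightarrow> x \<in> X \<Longrightarrow> - x \<in> X"
  using subspace_scale[of X x "- 1"] by (simp add: scale_minus_left)

lemma subspace_diff: "subspace s X \<Longrightarrow> x \<in> X \<Longrightarrow> y \<in> X \<Longrightarrow> x - y \<in> X"
  using subspace_add[of X x "- y"] subspace_neg by simp

lemma subspace_Int: "subspace s X \<Longrightarrow> subspace s Y \<Longrightarrow> subspace s (X \<inter> Y)"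
  unfolding subspace_def by blast

lemma subspace_Union_chain:
  assumes "C \<noteq> {}" "\<And>H. H \<in> C \<Longrightarrow> subspace s H" "\<And>H H'. H \<in> C \<Longrightarrow> H' \<in> C \<Longrightarrow> H \<subseteq> H' \<or> H' \<subseteq> H"
  shows "subspace s (\<Union>C)"
  unfolding subspace_def
proof (intro conjI ballI allI)
  show "0 \<in> \<Union>C" using assms(1,2) subspace_zero by blast
next
  fix x y assume "x \<in> \<Union>C" "y \<in> \<Union>C"
  then obtain H H' where "x \<in> H" "y \<in> H'" "H \<in> C" "H' \<in> C" by blast
  with assms(3)[of H H'] show "x + y \<in> \<Union>C" using assms(2) subspace_add by blast
next
  fix c x assume "x \<in> \<Union>C"
  then show "s c x \<in> \<Union>C" using assms(2) subspace_scale by blast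
qed

lemma subspace_ssum: "subspace s E \<Longrightarrow> subspace s F \<Longrightarrow> subspace s (ssum E F)"
  unfolding subspace_def ssum_def
proof (intro conjI ballI allI; elim conjE)
  assume "0 \<in> E" "0 \<in> F"
  then show "0 \<in> {x + y |x y. x \<in> E \<and> y \<in> F}" by force
next
  fix a b
  assume E: "\<forall>x\<in>E. \<forall>y\<in>E. x + y \<in> E" and F: "\<forall>x\<in>F. \<forall>y\<in>F. x + y \<in> F"
    and "a \<in> {x + y |x y. x \<in> E \<and> y \<in> F}" "b \<in> {x + y |x y. x \<in> E \<and> y \<in> F}"
  then obtain e f e' f' where "a = e + f" "b = e' + f'" "e \<in> E" "e' \<in> E" "f \<in> F" "f' \<in> F"
    by blast
  with E F have "a + b = (e + e') + (f + f')" "e + e' \<in> E" "f + f' \<in> F"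
    by (auto simp: algebra_simps)
  then show "a + b \<in> {x + y |x y. x \<in> E \<and> y \<in> F}" by blast
next
  fix a c
  assume E: "\<forall>c. \<forall>x\<in>E. s c x \<in> E" and F: "\<forall>c. \<forall>x\<in>F. s c x \<in> F"
    and "a \<in> {x + y |x y. x \<in> E \<and> y \<in> F}"
  then obtain e f where "a = e + f" "e \<in> E" "f \<in> F" by blast
  with E F show "s c a \<in> {x + y |x y. x \<in> E \<and> y \<in> F}"
    by (force simp: scale_add_right)
qed

lemma ssum_commute: "ssum E F = ssum F E"
  unfolding ssum_def by (auto; metis add.commute)

lemma subset_ssum_left: "subspace s F \<Longrightarrow> E \<subseteq> ssum E F"
  unfolding ssum_def using subspace_zero by force

lemma ssum_subset: "subspace s N \<Longrightarrow> E \<subseteq> N \<Longrightarrow> F \<subseteq> N \<Longrightarrow> ssum E F \<subseteq> N"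
  unfolding ssum_def using subspace_add by blast

definition plus_line :: "'v set \<Rightarrow> 'v \<Rightarrow> 'v set" where
  "plus_line E x = {e + s c x | e c. e \<in> E}"

lemma codim1_iff_plus_line: "codim1 s E N \<longleftrightarrow> E \<subseteq> N \<and> (\<exists>v\<in>N. v \<notin> E \<and> N = plus_line E v)"
  unfolding codim1_def plus_line_def ..

lemma subset_plus_line: "E \<subseteq> plus_line E x"
  unfolding plus_line_def by (force intro: exI[of _ 0])

lemma mem_plus_line: "subspace s E \<Longrightarrow> x \<in> plus_line E x"
  unfolding plus_line_def using subspace_zero by (force intro: exI[of _ 1])

lemma subspace_plus_line: "subspace s E \<Longrightarrow> subspace s (plus_line E x)"
  unfolding subspace_def plus_line_def
proof (intro conjI ballI allI; elim conjE)
  assume "0 \<in> E"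
  then show "0 \<in> {e + s c x |e c. e \<in> E}" by (force intro: exI[of _ 0])
next
  fix a b
  assume E: "\<forall>x\<in>E. \<forall>y\<in>E. x + y \<in> E"
    and "a \<in> {e + s c x |e c. e \<in> E}" "b \<in> {e + s c x |e c. e \<in> E}"
  then obtain e c e' c' where "a = e + s c x" "b = e' + s c' x" "e \<in> E" "e' \<in> E" by blast
  with E have "a + b = (e + e') + s (c + c') x" "e + e' \<in> E"
    by (auto simp: scale_add_left algebra_simps)
  then show "a + b \<in> {e + s c x |e c. e \<in> E}" by blast
next
  fix a d
  assume E: "\<forall>c. \<forall>x\<in>E. s c x \<in> E" and "a \<in> {e + s c x |e c. e \<in> E}"
  then obtain e c where "a = e + s c x" "e \<in> E" by blast
  with E have "s d a = s d e + s (d * c) x" "s d e \<in> E"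
    by (auto simp: scale_add_right scale_scale)
  then show "s d a \<in> {e + s c x |e c. e \<in> E}" by blast
qed

lemma plus_line_subset: "subspace s M \<Longrightarrow> E \<subseteq> M \<Longrightarrow> x \<in> M \<Longrightarrow> plus_line E x \<subseteq> M"
  unfolding plus_line_def using subspace_add subspace_scale by blast

lemma plus_line_exchange:
  assumes "subspace s E" "x \<in> plus_line E v" "x \<notin> E"
  shows "v \<in> plus_line E x"
proof -
  obtain e c where ec: "x = e + s c v" "e \<in> E" using assms(2) unfolding plus_line_def by blast
  with assms(3) have "c \<noteq> 0" by auto
  from ec have "s c v = x - e" by simp
  then have "v = s (inverse c) (x - e)"
    using scale_eq_iff_inverse[OF \<open>c \<noteq> 0\<close>] by blast
  then have "v = - s (inverse c) e + s (inverse c) x"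
    by (simp add: scale_diff_right)
  moreover have "- s (inverse c) e \<in> E"
    using assms(1) ec(2) by (simp add: subspace_neg subspace_scale)
  ultimately show ?thesis unfolding plus_line_def by blast
qed

lemma codim1_maximal:
  assumes "codim1 s E N" "subspace s E" "subspace s M" "E \<subseteq> M" "M \<subseteq> N" "\<not> M \<subseteq> E"
  shows "M = N"
proof -
  obtain v where v: "N = plus_line E v"
    using assms(1) unfolding codim1_iff_plus_line by blast
  obtain m where m: "m \<in> M" "m \<notin> E" using assms(6) by blast
  with assms(5) v have "v \<in> plus_line E m"
    using plus_line_exchange[OF assms(2)] by blast
  then have "v \<in> M"
    using plus_line_subset[OF assms(3,4) m(1)] by blast
  with v assms(3-5) show ?thesis
    using plus_line_subset by blast
qed

lemma codim1_not_subset: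
  assumes "codim1 s E N" "codim1 s X N" "subspace s E" "subspace s X" "E \<noteq> X"
  shows "\<not> E \<subseteq> X"
proof
  assume "E \<subseteq> X"
  with assms(5) have "\<not> X \<subseteq> E" by blast
  with \<open>E \<subseteq> X\<close> have "X = N"
    using codim1_maximal[OF assms(1,3,4)] assms(2) unfolding codim1_def by blast
  with assms(2) show False unfolding codim1_def by blast
qed

lemma codim1_eq_plus_line:
  assumes "codim1 s E N" "subspace s E" "subspace s N" "x \<in> N" "x \<notin> E"
  shows "N = plus_line E x"
proof (rule codim1_maximal[OF assms(1,2) subspace_plus_line[OF assms(2)], symmetric])
  show "E \<subseteq> plus_line E x" by (rule subset_plus_line)
  show "plus_line E x \<subseteq> N"
    using assms(1,3,4) plus_line_subset unfolding codim1_def by blast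
  show "\<not> plus_line E x \<subseteq> E" using assms(5) mem_plus_line[OF assms(2)] by blast
qed

lemma codim1_Int_plus_line:
  assumes "codim1 s E N" "subspace s E" "subspace s N" "subspace s X" "X \<subseteq> N"
    and "x \<in> X" "x \<notin> E"
  shows "X = plus_line (E \<inter> X) x"
proof
  show "plus_line (E \<inter> X) x \<subseteq> X" using plus_line_subset assms(4,6) by blast
  show "X \<subseteq> plus_line (E \<inter> X) x"
  proof
    fix y assume "y \<in> X"
    with assms have "y \<in> plus_line E x" using codim1_eq_plus_line by blast
    then obtain e c where ec: "y = e + s c x" "e \<in> E" unfolding plus_line_def by blast
    then have "e = y - s c x" by simp
    with \<open>y \<in> X\<close> assms(4,6) have "e \<in> X" by (simp add: subspace_diff subspace_scale)
    with ec show "y \<in> plus_line (E \<inter> X) x" unfolding plus_line_def by blast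
  qed
qed

definition linear_map :: "('v \<Rightarrow> 'v) \<Rightarrow> bool" where
  "linear_map \<tau> \<longleftrightarrow> (\<forall>x y. \<tau> (x + y) = \<tau> x + \<tau> y) \<and> (\<forall>c x. \<tau> (s c x) = s c (\<tau> x))"

definition linear_form :: "('v \<Rightarrow> 'k) \<Rightarrow> bool" where
  "linear_form f \<longleftrightarrow> (\<forall>x y. f (x + y) = f x + f y) \<and> (\<forall>c x. f (s c x) = c * f x)"

lemma linear_map_zero:
  assumes "linear_map \<tau>"
  shows "\<tau> 0 = 0"
proof -
  have "\<tau> (s 0 0) = s 0 (\<tau> 0)" using assms unfolding linear_map_def by blast
  then show ?thesis by simp
qed

lemma linear_map_inv:
  assumes "linear_map \<tau>" "bij \<tau>"
  shows "linear_map (inv \<tau>)"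
proof -
  have inv_\<tau>: "inv \<tau> (\<tau> x) = x" and \<tau>_inv: "\<tau> (inv \<tau> x) = x" for x
    using assms(2) by (simp_all add: bij_is_inj bij_is_surj surj_f_inv_f)
  have "inv \<tau> (x + y) = inv \<tau> (\<tau> (inv \<tau> x + inv \<tau> y))" for x y
    using assms(1) \<tau>_inv unfolding linear_map_def by simp
  moreover have "inv \<tau> (s c x) = inv \<tau> (\<tau> (s c (inv \<tau> x)))" for c x
    using assms(1) \<tau>_inv unfolding linear_map_def by simp
  ultimately show ?thesis unfolding linear_map_def inv_\<tau> by blast
qed

lemma linear_map_image_plus_line:
  assumes "linear_map \<tau>"
  shows "\<tau> ` plus_line E x = plus_line (\<tau> ` E) (\<tau> x)"
proof -
  have eq: "\<tau> (e + s c x) = \<tau> e + s c (\<tau> x)" for e c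
    using assms unfolding linear_map_def by simp
  show ?thesis
  proof
    show "\<tau> ` plus_line E x \<subseteq> plus_line (\<tau> ` E) (\<tau> x)"
      unfolding plus_line_def using eq by blast
    show "plus_line (\<tau> ` E) (\<tau> x) \<subseteq> \<tau> ` plus_line E x"
    proof
      fix y assume "y \<in> plus_line (\<tau> ` E) (\<tau> x)"
      then obtain e c where "e \<in> E" "y = \<tau> (e + s c x)" unfolding plus_line_def eq by blast
      then show "y \<in> \<tau> ` plus_line E x" unfolding plus_line_def by blast
    qed
  qed
qed

lemma linear_map_image_coset:
  "linear_map \<tau> \<Longrightarrow> \<tau> ` coset X a = coset (\<tau> ` X) (\<tau> a)"
  unfolding linear_map_def coset_def image_image by simp

lemma subspace_linear_map_image:
  assumes "linear_map \<tau>" "subspace s X"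
  shows "subspace s (\<tau> ` X)"
  unfolding subspace_def
proof (intro conjI ballI allI)
  show "0 \<in> \<tau> ` X" using linear_map_zero[OF assms(1)] subspace_zero[OF assms(2)] by force
  fix x y assume "x \<in> \<tau> ` X" "y \<in> \<tau> ` X"
  then obtain a b where "a \<in> X" "b \<in> X" "x + y = \<tau> (a + b)"
    using assms(1) unfolding linear_map_def by auto
  with assms(2) show "x + y \<in> \<tau> ` X" using subspace_add by blast
next
  fix c x assume "x \<in> \<tau> ` X"
  then obtain a where "a \<in> X" "s c x = \<tau> (s c a)"
    using assms(1) unfolding linear_map_def by auto
  with assms(2) show "s c x \<in> \<tau> ` X" using subspace_scale by blast
qed

lemma Gr_image_automorphism:
  assumes lin: "linear_map \<tau>" and "bij \<tau>" and "X \<in> Gr s"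
  shows "\<tau> ` X \<in> Gr s"
proof -
  obtain \<phi> where \<phi>: "quot_iso s X \<phi>" and "subspace s X" using assms(3) unfolding Gr_def by blast
  define \<sigma> where "\<sigma> = inv \<tau>"
  have \<sigma>\<tau>: "\<sigma> (\<tau> x) = x" and \<tau>\<sigma>: "\<tau> (\<sigma> x) = x" for x
    using assms(2) unfolding \<sigma>_def by (simp_all add: bij_is_inj bij_is_surj surj_f_inv_f)
  have lin\<sigma>: "linear_map \<sigma>" unfolding \<sigma>_def using linear_map_inv[OF assms(1,2)] .
  have \<sigma>X: "\<sigma> e \<in> X" if "e \<in> \<tau> ` X" for e using that \<sigma>\<tau> by auto
  define \<psi> where "\<psi> e = \<tau> ` \<phi> (\<sigma> e)" for e
  have "bij_betw \<sigma> (\<tau> ` X) X"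
    by (rule bij_betw_byWitness[where f'=\<tau>]) (use \<sigma>\<tau> \<tau>\<sigma> in auto)
  moreover have "bij_betw \<phi> X (range (coset X))" using \<phi> unfolding quot_iso_def by blast
  moreover have "bij_betw ((`) \<tau>) (range (coset X)) (range (coset (\<tau> ` X)))"
  proof (rule bij_betw_imageI)
    show "inj_on ((`) \<tau>) (range (coset X))"
      using assms(2) by (intro inj_onI) (simp add: bij_is_inj inj_image_eq_iff)
    have "coset (\<tau> ` X) a \<in> (`) \<tau> ` range (coset X)" for a
      using linear_map_image_coset[OF lin, of X "\<sigma> a"] \<tau>\<sigma> by auto
    then show "(`) \<tau> ` range (coset X) = range (coset (\<tau> ` X))"
      using linear_map_image_coset[OF lin, of X] by blast
  qed
  ultimately have "bij_betw ((`) \<tau> \<circ> \<phi> \<circ> \<sigma>) (\<tau> ` X) (range (coset (\<tau> ` X)))"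
    by (intro bij_betw_trans)
  then have "bij_betw \<psi> (\<tau> ` X) (range (coset (\<tau> ` X)))"
    unfolding \<psi>_def[abs_def] comp_def .
  moreover have "\<psi> (x + y) = coset (\<tau> ` X) (a + b)"
    if xy: "x \<in> \<tau> ` X" "y \<in> \<tau> ` X" and ab: "a \<in> \<psi> x" "b \<in> \<psi> y" for x y a b
  proof -
    obtain a' b' where "a' \<in> \<phi> (\<sigma> x)" "a = \<tau> a'" "b' \<in> \<phi> (\<sigma> y)" "b = \<tau> b'"
      using ab unfolding \<psi>_def by blast
    moreover from calculation have "\<phi> (\<sigma> x + \<sigma> y) = coset X (a' + b')"
      using \<phi> \<sigma>X xy unfolding quot_iso_def by blast
    ultimately show ?thesis
      using lin lin\<sigma> linear_map_image_coset[OF lin] unfolding \<psi>_def linear_map_def by simp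
  qed
  moreover have "\<psi> (s c x) = coset (\<tau> ` X) (s c a)" if x: "x \<in> \<tau> ` X" and a: "a \<in> \<psi> x" for x a c
  proof -
    obtain a' where "a' \<in> \<phi> (\<sigma> x)" "a = \<tau> a'" using a unfolding \<psi>_def by blast
    moreover from calculation have "\<phi> (s c (\<sigma> x)) = coset X (s c a')"
      using \<phi> \<sigma>X x unfolding quot_iso_def by blast
    ultimately show ?thesis
      using lin lin\<sigma> linear_map_image_coset[OF lin] unfolding \<psi>_def linear_map_def by simp
  qed
  ultimately have "quot_iso s (\<tau> ` X) \<psi>" unfolding quot_iso_def by blast
  with subspace_linear_map_image[OF lin \<open>subspace s X\<close>] show ?thesis unfolding Gr_def by blast
qed


section \<open>Separating a vector from a subspace by a linear form\<close>

lemma exists_complement_hyperplane: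
  assumes "subspace s U" "x0 \<notin> U"
  obtains H where "subspace s H" "U \<subseteq> H" "x0 \<notin> H" "\<And>v. v \<in> plus_line H x0"
proof -
  define A where "A = {H. subspace s H \<and> U \<subseteq> H \<and> x0 \<notin> H}"
  have "\<exists>H\<in>A. \<forall>Y\<in>A. H \<subseteq> Y \<longrightarrow> Y = H"
  proof (rule subset_Zorn_nonempty)
    show "A \<noteq> {}" using assms unfolding A_def by blast
    fix C assume C: "C \<noteq> {}" "subset.chain A C"
    then have "C \<subseteq> A" and "\<And>H H'. H \<in> C \<Longrightarrow> H' \<in> C \<Longrightarrow> H \<subseteq> H' \<or> H' \<subseteq> H"
      unfolding subset_chain_def by auto
    then have "subspace s (\<Union>C)" using subspace_Union_chain[OF C(1)] unfolding A_def by blast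
    moreover have "U \<subseteq> \<Union>C" "x0 \<notin> \<Union>C" using C(1) \<open>C \<subseteq> A\<close> unfolding A_def by auto
    ultimately show "\<Union>C \<in> A" unfolding A_def by blast
  qed
  then obtain H where "H \<in> A" and max: "\<And>Y. Y \<in> A \<Longrightarrow> H \<subseteq> Y \<Longrightarrow> Y = H" by blast
  then have H: "subspace s H" "U \<subseteq> H" "x0 \<notin> H" unfolding A_def by auto
  have "v \<in> plus_line H x0" for v
  proof (rule ccontr)
    assume "v \<notin> plus_line H x0"
    then have "x0 \<notin> plus_line H v" using plus_line_exchange[OF H(1) _ H(3)] by blast
    with H have "plus_line H v \<in> A"
      unfolding A_def using subspace_plus_line subset_plus_line by blast
    then have "plus_line H v = H" using max subset_plus_line by blast
    with \<open>v \<notin> plus_line H x0\<close> show False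
      using mem_plus_line[OF H(1)] subset_plus_line by blast
  qed
  with H that show thesis by blast
qed

lemma linear_form_of_complement:
  assumes H: "subspace s H" "x0 \<notin> H" and spans: "\<And>v. v \<in> plus_line H x0"
  obtains f where "linear_form f" "\<And>h. h \<in> H \<Longrightarrow> f h = 0" "f x0 = 1"
proof -
  have coeff_unique: "c = c'" if "h \<in> H" "h' \<in> H" "h + s c x0 = h' + s c' x0" for h h' c c'
  proof (rule ccontr)
    assume "c \<noteq> c'"
    then have "c - c' \<noteq> 0" by simp
    from that(3) have "s (c - c') x0 = h' - h" by (simp add: scale_diff_left algebra_simps)
    with \<open>c - c' \<noteq> 0\<close> have "x0 = s (inverse (c - c')) (h' - h)"
      using scale_eq_iff_inverse by blast
    with H that(1,2) show False by (simp add: subspace_scale subspace_diff)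
  qed
  define f where "f v = (THE c. \<exists>h\<in>H. v = h + s c x0)" for v
  have f_eq: "f (h + s c x0) = c" if "h \<in> H" for h c
    unfolding f_def using that coeff_unique by (intro the_equality) blast+
  have decomp: "\<exists>h\<in>H. \<exists>c. v = h + s c x0" for v
    using spans[of v] unfolding plus_line_def by blast
  have "f (x + y) = f x + f y" for x y
  proof -
    obtain h c h' c' where "h \<in> H" "h' \<in> H" "x = h + s c x0" "y = h' + s c' x0"
      using decomp by metis
    moreover from calculation have "x + y = (h + h') + s (c + c') x0"
      by (simp add: scale_add_left algebra_simps)
    ultimately show ?thesis using f_eq H(1) subspace_add by metis
  qed
  moreover have "f (s a x) = a * f x" for a x
  proof -
    obtain h c where "h \<in> H" "x = h + s c x0" using decomp by metis
    moreover from calculation have "s a x = s a h + s (a * c) x0"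
      by (simp add: scale_add_right scale_scale)
    ultimately show ?thesis using f_eq H(1) subspace_scale by metis
  qed
  moreover have "f h = 0" if "h \<in> H" for h using f_eq[OF that, of 0] by simp
  moreover have "f x0 = 1" using f_eq[OF subspace_zero[OF H(1)], of 1] by simp
  ultimately show thesis using that unfolding linear_form_def by blast
qed

lemma exists_linear_form_separating:
  assumes "subspace s U" "x0 \<notin> U"
  obtains f where "linear_form f" "\<And>u. u \<in> U \<Longrightarrow> f u = 0" "f x0 = 1"
proof -
  obtain H where "subspace s H" "U \<subseteq> H" "x0 \<notin> H" "\<And>v. v \<in> plus_line H x0"
    using exists_complement_hyperplane[OF assms] by blast
  with linear_form_of_complement that show thesis by (metis subsetD)
qed


section \<open>Transvections and hyperplanes\<close>

definition transvection :: "('v \<Rightarrow> 'k) \<Rightarrow> 'v \<Rightarrow> 'v \<Rightarrow> 'v" where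
  "transvection f u v = v + s (f v) u"

lemma linear_map_transvection: "linear_form f \<Longrightarrow> linear_map (transvection f u)"
  unfolding linear_map_def linear_form_def transvection_def
  by (simp add: scale_add_left scale_add_right scale_scale algebra_simps)

lemma transvection_inverse:
  "linear_form f \<Longrightarrow> f u = 0 \<Longrightarrow> transvection f (- u) (transvection f u v) = v"
  unfolding linear_form_def transvection_def by (simp add: scale_minus_right)

lemma bij_transvection:
  assumes "linear_form f" "f u = 0"
  shows "bij (transvection f u)"
proof (rule bij_betw_byWitness[where f' = "transvection f (- u)"])
  have "f (- u) = 0"
    using assms scale_minus_left[of 1 u] unfolding linear_form_def by (metis mult_zero_right scale_one)
  with assms show "\<forall>v\<in>UNIV. transvection f (- u) (transvection f u v) = v"
    and "\<forall>v\<in>UNIV. transvection f u (transvection f (- u) v) = v"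
    using transvection_inverse[of f "- u"] transvection_inverse by auto
qed simp_all

lemma codim1_conjugate:
  assumes E: "codim1 s E N" "subspace s E" and X: "codim1 s X N" "subspace s X"
    and "subspace s N"
  obtains \<tau> where "linear_map \<tau>" "bij \<tau>" "\<tau> ` X = E"
proof (cases "E = X")
  case True
  with that show thesis unfolding linear_map_def by (metis bij_id id_apply image_id)
next
  case False
  obtain e0 where e0: "e0 \<in> E" "e0 \<notin> X" using codim1_not_subset[OF E(1) X(1) E(2) X(2) False] by blast
  obtain x0 where x0: "x0 \<in> X" "x0 \<notin> E" using codim1_not_subset[OF X(1) E(1) X(2) E(2)] False by blast
  have "E \<subseteq> N" "X \<subseteq> N" using E(1) X(1) unfolding codim1_def by auto
  define W where "W = E \<inter> X"
  define u where "u = e0 - x0"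
  have X_eq: "X = plus_line W x0"
    unfolding W_def using codim1_Int_plus_line[OF E \<open>subspace s N\<close> X(2) \<open>X \<subseteq> N\<close> x0] .
  have E_eq: "E = plus_line W e0"
    unfolding W_def using codim1_Int_plus_line[OF X \<open>subspace s N\<close> E(2) \<open>E \<subseteq> N\<close> e0]
    by (simp add: Int_commute)
  have sW: "subspace s W" unfolding W_def using subspace_Int E(2) X(2) .
  have "x0 \<notin> plus_line W u"
  proof
    assume "x0 \<in> plus_line W u"
    then obtain w c where wc: "x0 = w + s c u" "w \<in> W" unfolding plus_line_def by blast
    then have eq: "s (1 + c) x0 = w + s c e0"
      unfolding u_def by (simp add: scale_diff_right scale_add_left algebra_simps)
    have "w + s c e0 \<in> E" using wc(2) e0(1) E(2) unfolding W_def by (simp add: subspace_add subspace_scale)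
    show False
    proof (cases "1 + c = 0")
      case True
      then have "c = - 1" by (simp add: add_eq_0_iff)
      with eq have "e0 = w" by (simp add: scale_minus_left)
      with wc(2) e0(2) show False unfolding W_def by blast
    next
      case False
      with eq have "x0 = s (inverse (1 + c)) (w + s c e0)" using scale_eq_iff_inverse by blast
      with \<open>w + s c e0 \<in> E\<close> x0(2) E(2) show False by (simp add: subspace_scale)
    qed
  qed
  then obtain f where f: "linear_form f" "\<And>v. v \<in> plus_line W u \<Longrightarrow> f v = 0" "f x0 = 1"
    using exists_linear_form_separating[OF subspace_plus_line[OF sW]] by blast
  have "f u = 0" using f(2) mem_plus_line[OF sW] by blast
  have "transvection f u ` X = plus_line (transvection f u ` W) (transvection f u x0)"
    unfolding X_eq using linear_map_image_plus_line[OF linear_map_transvection[OF f(1)]] .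
  also have "transvection f u ` W = W"
    using f(2) subset_plus_line unfolding transvection_def by force
  also have "transvection f u x0 = e0" unfolding transvection_def u_def f(3) by simp
  finally have "transvection f u ` X = E" using E_eq by simp
  with that linear_map_transvection[OF f(1)] bij_transvection[OF f(1) \<open>f u = 0\<close>] show thesis .
qed

lemma top_of_subset_Gr:
  assumes "X \<in> Gr s" "codim1 s X N" "subspace s N"
  shows "top_of s N \<subseteq> Gr s"
proof
  fix E assume "E \<in> top_of s N"
  then have "codim1 s E N" "subspace s E" unfolding top_of_def by auto
  moreover have "subspace s X" using assms(1) unfolding Gr_def by blast
  ultimately obtain \<tau> where "linear_map \<tau>" "bij \<tau>" "\<tau> ` X = E"
    using codim1_conjugate assms(2,3) by metis
  with Gr_image_automorphism assms(1) show "E \<in> Gr s" by metis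
qed

lemma ssum_codim1_distinct:
  assumes "codim1 s E N" "codim1 s E' N" "subspace s E" "subspace s E'" "subspace s N" "E \<noteq> E'"
  shows "ssum E E' = N"
proof (rule codim1_maximal[OF assms(1,3) subspace_ssum[OF assms(3,4)] subset_ssum_left[OF assms(4)]])
  show "ssum E E' \<subseteq> N" using ssum_subset assms(1,2,5) unfolding codim1_def by blast
  have "E' \<subseteq> ssum E E'" using subset_ssum_left[OF assms(3)] ssum_commute by metis
  with codim1_not_subset[OF assms(2,1,4,3)] assms(6) show "\<not> ssum E E' \<subseteq> E" by blast
qed

lemma top_of_adjacent:
  assumes "E \<in> top_of s N" "E' \<in> top_of s N" "E \<noteq> E'" "subspace s N"
  shows "adjacent s E E'"
  using assms ssum_codim1_distinct unfolding adjacent_def top_of_def by blast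

lemma adjacent_top_of_iff:
  assumes "subspace s E" "subspace s E'" "adjacent s E E'" "subspace s N"
  shows "E \<in> top_of s N \<and> E' \<in> top_of s N \<longleftrightarrow> ssum E E' = N"
proof
  have "E \<noteq> E'"
    using assms(1,3) ssum_subset[of E E E] unfolding adjacent_def codim1_def by blast
  then show "ssum E E' = N" if "E \<in> top_of s N \<and> E' \<in> top_of s N"
    using that assms ssum_codim1_distinct unfolding top_of_def by blast
  show "E \<in> top_of s N \<and> E' \<in> top_of s N" if "ssum E E' = N"
    using that assms unfolding adjacent_def top_of_def codim1_def by blast
qed

end


theorem lemma2p2:
  fixes s :: "'k::division_ring \<Rightarrow> 'v::ab_group_add \<Rightarrow> 'v"
    and N X :: "'v set"
  assumes "left_vector_space s"
    and "dim_gt_2 s"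
    and "Gr s \<noteq> {}"
    and "subspace s N"
    and "X \<in> Gr s" and "X \<subseteq> N" and "codim1 s X N"
  shows "top_of s N \<subseteq> Gr s
    \<and> (\<forall>E\<in>top_of s N. \<forall>E'\<in>top_of s N. E \<noteq> E' \<longrightarrow> adjacent s E E')
    \<and> (\<forall>E\<in>Gr s. \<forall>E'\<in>Gr s. adjacent s E E' \<longrightarrow>
          ((E \<in> top_of s N \<and> E' \<in> top_of s N) \<longleftrightarrow> ssum E E' = N))"
proof -
  interpret left_vs s by unfold_locales (fact assms(1))
  have "top_of s N \<subseteq> Gr s" by (rule top_of_subset_Gr[OF assms(5,7,4)])
  moreover have "adjacent s E E'" if "E \<in> top_of s N" "E' \<in> top_of s N" "E \<noteq> E'" for E E'
    using top_of_adjacent that assms(4) by blast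
  moreover have "(E \<in> top_of s N \<and> E' \<in> top_of s N) \<longleftrightarrow> ssum E E' = N"
    if "E \<in> Gr s" "E' \<in> Gr s" "adjacent s E E'" for E E'
    using adjacent_top_of_iff that assms(4) unfolding Gr_def by blast
  ultimately show ?thesis by blast
qed

end
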